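(* For all $k,r\ge 0$, every graph in $M^k_r$ is connected and has diameter at most $2^r$.
   Context: Colors are red, blue, green. A $k$-precolored graph is a finite graph together with an assignment of colors to at most $k$ of its vertices. The game $\mathcal{G}^k_r(H)$ on a $k$-precolored graph $H$ starts from the given precoloring and lasts $r$ rounds; in each round Spoiler may erase the colors of some currently colored vertices and then selects a vertex, which Duplicator colors with one of the three colors; after each round at most $k$ vertices may be colored. Duplicator wins if the initial partial coloring and the partial coloring after each round are proper; otherwise Spoiler wins. A subgraph $H'$ of a $k$-precolored graph $H$ is a subgraph of the underlying graph in which every vertex colored in $H'$ has the same color in $H$ (vertices colored in $H$ may be uncolored in $H'$); it is proper if $H'\ne H$ as precolored graphs. $M^k_r$ is the family of all $k$-precolored graphs $H$ such that Spoiler has a winning strategy in $\mathcal{G}^k_r(H)$ while Duplicator has a winning strategy in $\mathcal{G}^k_r(K)$ for every proper subgraph $K$ of $H$. *)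

theory Defs
  imports Main
begin

datatype color = Red | Blue | Green

record 'a pcgraph =
  verts :: "'a set"
  edges :: "('a \<times> 'a) set"
  pcol  :: "'a \<Rightarrow> color option"

definition is_graph :: "'a pcgraph \<Rightarrow> bool" where
  "is_graph H \<longleftrightarrow> finite (verts H) \<and> edges H \<subseteq> verts H \<times> verts H
     \<and> sym (edges H) \<and> irrefl (edges H) \<and> dom (pcol H) \<subseteq> verts H"

definition k_precolored :: "nat \<Rightarrow> 'a pcgraph \<Rightarrow> bool" where
  "k_precolored k H \<longleftrightarrow> is_graph H \<and> card (dom (pcol H)) \<le> k"

definition proper_col :: "('a \<times> 'a) set \<Rightarrow> ('a \<Rightarrow> color option) \<Rightarrow> bool" where
  "proper_col E p \<longleftrightarrow> (\<forall>(u,v)\<in>E. \<forall>a b. p u = Some a \<longrightarrow> p v = Some b \<longrightarrow> a \<noteq> b)"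

text \<open>A legal Spoiler move from partial coloring p: erase some colors (obtaining
  q below p as a map), then select a vertex v, such that after Duplicator colors v
  at most k vertices are colored.\<close>
definition legal_move :: "nat \<Rightarrow> 'a set \<Rightarrow> ('a \<Rightarrow> color option) \<Rightarrow> ('a \<Rightarrow> color option) \<Rightarrow> 'a \<Rightarrow> bool" where
  "legal_move k V p q v \<longleftrightarrow> q \<subseteq>\<^sub>m p \<and> v \<in> V \<and> card (insert v (dom q)) \<le> k"

fun spoiler_wins :: "nat \<Rightarrow> nat \<Rightarrow> 'a set \<Rightarrow> ('a \<times> 'a) set \<Rightarrow> ('a \<Rightarrow> color option) \<Rightarrow> bool" where
  "spoiler_wins k 0 V E p = (\<not> proper_col E p)"
| "spoiler_wins k (Suc r) V E p = (\<not> proper_col E p \<or>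
     (\<exists>q v. legal_move k V p q v \<and> (\<forall>c. spoiler_wins k r V E (q(v \<mapsto> c)))))"

definition spoiler_wins_game :: "nat \<Rightarrow> nat \<Rightarrow> 'a pcgraph \<Rightarrow> bool" where
  "spoiler_wins_game k r H = spoiler_wins k r (verts H) (edges H) (pcol H)"

definition pc_subgraph :: "'a pcgraph \<Rightarrow> 'a pcgraph \<Rightarrow> bool" where
  "pc_subgraph K H \<longleftrightarrow> is_graph K \<and> verts K \<subseteq> verts H \<and> edges K \<subseteq> edges H
     \<and> pcol K \<subseteq>\<^sub>m pcol H"

definition M :: "nat \<Rightarrow> nat \<Rightarrow> 'a pcgraph set" where
  "M k r = {H. k_precolored k H \<and> spoiler_wins_game k r H \<and>
     (\<forall>K. pc_subgraph K H \<and> K \<noteq> H \<longrightarrow> \<not> spoiler_wins_game k r K)}"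

definition walk :: "'a pcgraph \<Rightarrow> 'a list \<Rightarrow> bool" where
  "walk H xs \<longleftrightarrow> xs \<noteq> [] \<and> set xs \<subseteq> verts H \<and>
     (\<forall>i. Suc i < length xs \<longrightarrow> (xs ! i, xs ! Suc i) \<in> edges H)"

definition connected_pc :: "'a pcgraph \<Rightarrow> bool" where
  "connected_pc H \<longleftrightarrow> (\<forall>u\<in>verts H. \<forall>v\<in>verts H.
     \<exists>xs. walk H xs \<and> hd xs = u \<and> last xs = v)"

definition diam_le :: "'a pcgraph \<Rightarrow> nat \<Rightarrow> bool" where
  "diam_le H d \<longleftrightarrow> (\<forall>u\<in>verts H. \<forall>v\<in>verts H.
     \<exists>xs. walk H xs \<and> hd xs = u \<and> last xs = v \<and> length xs \<le> Suc d)"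

end

theory Submission
  imports Defs
begin

text \<open>By induction on the number of rounds, every position won by Spoiler contains a
  winning sub-position of diameter at most \<open>2^r\<close>.  With no round left, Spoiler wins only
  because of a monochromatic edge, a graph of diameter 1.  Otherwise Spoiler erases to \<open>q\<close>
  and selects \<open>v\<close>; for each of the three answers \<open>c\<close> induction yields a winning subgraph
  \<open>K c\<close> of diameter at most \<open>2^r\<close>.  If some \<open>K c\<close> avoids \<open>v\<close>, it is won already
  from \<open>q\<close>; otherwise the union of the \<open>K c\<close> is won by the same move and any two of its
  vertices are joined through \<open>v\<close>, so its diameter is at most \<open>2^(r+1)\<close>.  For a graph in
  \<open>M k r\<close> minimality forces this sub-position to be the whole graph.\<close>

lemma walk_Cons_Cons:
  "walk H (x # y # xs) \<longleftrightarrow> x \<in> verts H \<and> (x, y) \<in> edges H \<and> walk H (y # xs)"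
  unfolding walk_def by (auto simp: nth_Cons split: nat.splits)

lemma walk_mono:
  "walk H xs \<Longrightarrow> verts H \<subseteq> verts H' \<Longrightarrow> edges H \<subseteq> edges H' \<Longrightarrow> walk H' xs"
  unfolding walk_def by blast

lemma walk_append_tl:
  "walk H xs \<Longrightarrow> walk H ys \<Longrightarrow> last xs = hd ys \<Longrightarrow> walk H (xs @ tl ys)"
proof (induction xs rule: induct_list012)
  case 1
  then show ?case by (simp add: walk_def)
next
  case (2 x)
  then show ?case by (cases ys) auto
next
  case (3 x y zs)
  then show ?case by (simp add: walk_Cons_Cons)
qed

lemma diam_le_mono: "diam_le H d \<Longrightarrow> d \<le> d' \<Longrightarrow> diam_le H d'"
  unfolding diam_le_def by (meson Suc_le_mono le_trans)

lemma map_le_restrict_map: "f \<subseteq>\<^sub>m g \<Longrightarrow> dom f \<subseteq> A \<Longrightarrow> f \<subseteq>\<^sub>m g |` A"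
  unfolding map_le_def by auto

lemma proper_col_antimono:
  assumes "proper_col E' p'" and "E \<subseteq> E'" and "p \<subseteq>\<^sub>m p'"
  shows "proper_col E p"
proof -
  have "p' u = Some a" if "p u = Some a" for u a
    using assms(3) that unfolding map_le_def by (metis domI)
  then show ?thesis using assms(1,2) unfolding proper_col_def by blast
qed

lemma spoiler_wins_mono:
  "spoiler_wins k r V E p \<Longrightarrow> V \<subseteq> V' \<Longrightarrow> E \<subseteq> E' \<Longrightarrow> p \<subseteq>\<^sub>m p'
    \<Longrightarrow> spoiler_wins k r V' E' p'"
proof (induction r arbitrary: p p')
  case 0
  then show ?case using proper_col_antimono by (metis spoiler_wins.simps(1))
next
  case (Suc r)
  show ?case
  proof (cases "proper_col E p")
    case False
    then have "\<not> proper_col E' p'" using Suc.prems(3,4) proper_col_antimono by blast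
    then show ?thesis by simp
  next
    case True
    then obtain q v where move: "legal_move k V p q v"
      and wins: "\<forall>c. spoiler_wins k r V E (q(v \<mapsto> c))"
      using Suc.prems(1) by auto
    have "legal_move k V' p' q v"
      using move Suc.prems map_le_trans unfolding legal_move_def by blast
    moreover have "\<forall>c. spoiler_wins k r V' E' (q(v \<mapsto> c))"
      using wins Suc.IH Suc.prems(2,3) map_le_refl by blast
    ultimately show ?thesis by (simp only: spoiler_wins.simps) blast
  qed
qed

lemma spoiler_wins_Suc: "spoiler_wins k r V E p \<Longrightarrow> spoiler_wins k (Suc r) V E p"
proof (induction r arbitrary: p)
  case (Suc r)
  then show ?case by (metis spoiler_wins.simps(2))
qed simp

definition pc_Union :: "('i \<Rightarrow> 'a pcgraph) \<Rightarrow> ('a \<Rightarrow> color option) \<Rightarrow> 'a pcgraph" where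
  "pc_Union K q =
     \<lparr>verts = (\<Union>i. verts (K i)), edges = (\<Union>i. edges (K i)), pcol = q |` (\<Union>i. verts (K i))\<rparr>"

lemma is_graph_pc_Union:
  assumes "\<And>i. is_graph (K i)" and "finite (\<Union>i. verts (K i))"
  shows "is_graph (pc_Union K q)"
proof -
  have sub: "edges (K i) \<subseteq> verts (K i) \<times> verts (K i)" and "sym (edges (K i))"
    and "irrefl (edges (K i))" for i
    using assms(1)[of i] unfolding is_graph_def by auto
  have "(\<Union>i. edges (K i)) \<subseteq> (\<Union>i. verts (K i)) \<times> (\<Union>i. verts (K i))"
    using sub by fast
  moreover have "sym (\<Union>i. edges (K i))"
    using \<open>\<And>i. sym (edges (K i))\<close> by (fast intro: symI dest: symD)
  moreover have "irrefl (\<Union>i. edges (K i))"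
    using \<open>\<And>i. irrefl (edges (K i))\<close> unfolding irrefl_def by fast
  ultimately show ?thesis
    using assms(2) unfolding is_graph_def pc_Union_def by simp
qed

lemma diam_le_pc_Union:
  assumes "\<And>i. diam_le (K i) d" and "\<And>i. v \<in> verts (K i)"
  shows "diam_le (pc_Union K q) (2 * d)"
  unfolding diam_le_def
proof (intro ballI)
  fix a b assume "a \<in> verts (pc_Union K q)" "b \<in> verts (pc_Union K q)"
  then obtain i j where "a \<in> verts (K i)" "b \<in> verts (K j)" unfolding pc_Union_def by auto
  then obtain xs ys where
    xs: "walk (K i) xs" "hd xs = a" "last xs = v" "length xs \<le> Suc d" and
    ys: "walk (K j) ys" "hd ys = v" "last ys = b" "length ys \<le> Suc d"
    using assms(1)[of i] assms(1)[of j] assms(2)[of i] assms(2)[of j]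
    unfolding diam_le_def by blast
  have sub: "verts (K l) \<subseteq> verts (pc_Union K q)" "edges (K l) \<subseteq> edges (pc_Union K q)" for l
    unfolding pc_Union_def by auto
  have ne: "xs \<noteq> []" "ys \<noteq> []" using xs(1) ys(1) unfolding walk_def by auto
  have "walk (pc_Union K q) (xs @ tl ys)"
    using walk_append_tl[OF walk_mono[OF xs(1) sub] walk_mono[OF ys(1) sub]] xs(3) ys(2) by simp
  moreover have "hd (xs @ tl ys) = a" "last (xs @ tl ys) = b"
    using xs ys ne by (auto simp: last_append last_tl) (metis last_ConsL list.collapse)
  moreover have "length (xs @ tl ys) \<le> Suc (2 * d)" using xs(4) ys(4) by auto
  ultimately show "\<exists>zs. walk (pc_Union K q) zs \<and> hd zs = a \<and> last zs = b \<and> length zs \<le> Suc (2 * d)"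
    by blast
qed

definition win_witness ::
    "nat \<Rightarrow> nat \<Rightarrow> 'a set \<Rightarrow> ('a \<times> 'a) set \<Rightarrow> ('a \<Rightarrow> color option) \<Rightarrow> 'a pcgraph \<Rightarrow> bool" where
  "win_witness k r V E p K \<longleftrightarrow> is_graph K \<and> verts K \<subseteq> V \<and> edges K \<subseteq> E \<and> pcol K \<subseteq>\<^sub>m p
     \<and> spoiler_wins k r (verts K) (edges K) (pcol K) \<and> diam_le K (2 ^ r)"

lemma win_witness_improper:
  assumes "\<not> proper_col E p" and "irrefl E" and "sym E" and "E \<subseteq> V \<times> V"
  shows "\<exists>K. win_witness k r V E p K"
proof -
  obtain a b x where ab: "(a, b) \<in> E" "p a = Some x" "p b = Some x"
    using assms(1) unfolding proper_col_def by auto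
  have "a \<noteq> b" using ab(1) assms(2) unfolding irrefl_def by auto
  define K :: "'a pcgraph" where "K = \<lparr>verts = {a, b}, edges = {(a, b), (b, a)}, pcol = p |` {a, b}\<rparr>"
  have "is_graph K" unfolding K_def is_graph_def sym_def irrefl_def using \<open>a \<noteq> b\<close> by auto
  moreover have "verts K \<subseteq> V" "edges K \<subseteq> E" "pcol K \<subseteq>\<^sub>m p"
    using ab(1) assms(3,4) unfolding K_def sym_def map_le_def by auto
  moreover have "spoiler_wins k r (verts K) (edges K) (pcol K)"
    using ab by (cases r) (auto simp: K_def proper_col_def)
  moreover have "diam_le K 1"
    unfolding diam_le_def
  proof (intro ballI)
    fix u w assume "u \<in> verts K" "w \<in> verts K"
    then have "walk K (if u = w then [u] else [u, w])"
      by (auto simp: K_def walk_Cons_Cons walk_def)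
    then show "\<exists>xs. walk K xs \<and> hd xs = u \<and> last xs = w \<and> length xs \<le> Suc 1"
      by (intro exI[of _ "if u = w then [u] else [u, w]"]) auto
  qed
  then have "diam_le K (2 ^ r)" by (rule diam_le_mono) simp
  ultimately show ?thesis unfolding win_witness_def by blast
qed

lemma win_witness_avoiding_selected:
  assumes "win_witness k r V E (q(v \<mapsto> c)) K" and "v \<notin> verts K" and "q \<subseteq>\<^sub>m p"
  shows "win_witness k (Suc r) V E p K"
proof -
  have "pcol K \<subseteq>\<^sub>m q(v \<mapsto> c)" and "dom (pcol K) \<subseteq> verts K"
    using assms(1) unfolding win_witness_def is_graph_def by auto
  then have "pcol K \<subseteq>\<^sub>m q"
    using assms(2) unfolding map_le_def by (metis fun_upd_other subsetD)
  then have "pcol K \<subseteq>\<^sub>m p"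
    using assms(3) by (rule map_le_trans)
  moreover have "diam_le K (2 ^ Suc r)"
    using assms(1) diam_le_mono unfolding win_witness_def by fastforce
  ultimately show ?thesis using assms(1) spoiler_wins_Suc unfolding win_witness_def by blast
qed

lemma win_witness_pc_Union:
  assumes move: "legal_move k V p q v" and "proper_col E p"
    and "finite V" and "dom p \<subseteq> V"
    and K: "\<And>c. win_witness k r V E (q(v \<mapsto> c)) (K c)" and v: "\<And>c. v \<in> verts (K c)"
  shows "win_witness k (Suc r) V E p (pc_Union K q)"
proof -
  let ?W = "\<Union>c. verts (K c)" and ?F = "\<Union>c. edges (K c)"
  have q: "q \<subseteq>\<^sub>m p" "v \<in> V" "card (insert v (dom q)) \<le> k"
    using move unfolding legal_move_def by auto
  have WV: "?W \<subseteq> V" and FE: "?F \<subseteq> E"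
    using K unfolding win_witness_def by auto
  have qW: "q |` ?W \<subseteq>\<^sub>m p"
    using q(1) unfolding map_le_def by auto
  have "dom q \<subseteq> V"
    using map_le_implies_dom_le[OF q(1)] assms(4) by blast
  then have "finite (insert v (dom q))"
    using assms(3) finite_subset by blast
  then have "card (insert v (dom (q |` ?W))) \<le> card (insert v (dom q))"
    by (rule card_mono) auto
  then have "legal_move k ?W (q |` ?W) (q |` ?W) v"
    using q(3) v unfolding legal_move_def by auto
  moreover have "spoiler_wins k r ?W ?F ((q |` ?W)(v \<mapsto> c))" for c
  proof -
    have wins: "spoiler_wins k r (verts (K c)) (edges (K c)) (pcol (K c))"
      and le: "pcol (K c) \<subseteq>\<^sub>m q(v \<mapsto> c)" and "dom (pcol (K c)) \<subseteq> ?W"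
      using K[of c] unfolding win_witness_def is_graph_def by auto
    then have "pcol (K c) \<subseteq>\<^sub>m (q(v \<mapsto> c)) |` ?W"
      using map_le_restrict_map[OF le] by blast
    also have "(q(v \<mapsto> c)) |` ?W = (q |` ?W)(v \<mapsto> c)"
      using v[of c] by (intro ext) (auto simp: restrict_map_def)
    finally show ?thesis
      using spoiler_wins_mono[OF wins, of ?W ?F] by blast
  qed
  moreover have "proper_col ?F (q |` ?W)"
    using assms(2) FE qW by (rule proper_col_antimono)
  ultimately have "spoiler_wins k (Suc r) ?W ?F (q |` ?W)"
    unfolding spoiler_wins.simps(2) by (intro disjI2 exI[of _ "q |` ?W"] exI[of _ v]) blast
  moreover have "is_graph (pc_Union K q)"
    using K WV assms(3) by (intro is_graph_pc_Union) (auto simp: win_witness_def finite_subset)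
  moreover have "diam_le (pc_Union K q) (2 ^ Suc r)"
    using diam_le_pc_Union[of K "2 ^ r" v q] K v unfolding win_witness_def by simp
  ultimately show ?thesis
    using WV FE qW unfolding win_witness_def pc_Union_def by (simp only: pcgraph.simps)
qed

lemma spoiler_wins_imp_win_witness:
  assumes "spoiler_wins k r V E p"
    and "finite V" and "E \<subseteq> V \<times> V" and "sym E" and "irrefl E" and "dom p \<subseteq> V"
  shows "\<exists>K. win_witness k r V E p K"
  using assms(1,6)
proof (induction r arbitrary: p)
  case 0
  then show ?case using win_witness_improper assms by auto
next
  case (Suc r)
  show ?case
  proof (cases "proper_col E p")
    case False
    then show ?thesis using win_witness_improper assms by blast
  next
    case True
    then obtain q v where move: "legal_move k V p q v"
      and wins: "\<And>c. spoiler_wins k r V E (q(v \<mapsto> c))"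
      using Suc.prems(1) by auto
    have qp: "q \<subseteq>\<^sub>m p" and "v \<in> V" using move unfolding legal_move_def by auto
    then have "dom (q(v \<mapsto> c)) \<subseteq> V" for c
      using map_le_implies_dom_le[of q p] Suc.prems(2) by auto
    then obtain K where K: "\<And>c. win_witness k r V E (q(v \<mapsto> c)) (K c)"
      using Suc.IH[OF wins] by metis
    show ?thesis
    proof (cases "\<forall>c. v \<in> verts (K c)")
      case True
      then show ?thesis using win_witness_pc_Union[OF move \<open>proper_col E p\<close> assms(2) Suc.prems(2) K]
        by blast
    next
      case False
      then obtain c where "v \<notin> verts (K c)" by blast
      then show ?thesis using win_witness_avoiding_selected[OF K _ qp] by blast
    qed
  qed
qed

theorem lemma6:
  fixes k r :: nat and H :: "'a pcgraph"
  assumes "H \<in> M k r"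
  shows "connected_pc H \<and> diam_le H (2 ^ r)"
proof -
  have H: "is_graph H" "spoiler_wins_game k r H"
    and minimal: "\<And>K. pc_subgraph K H \<Longrightarrow> K \<noteq> H \<Longrightarrow> \<not> spoiler_wins_game k r K"
    using assms unfolding M_def k_precolored_def by auto
  obtain K where K: "win_witness k r (verts H) (edges H) (pcol H) K"
    using spoiler_wins_imp_win_witness H unfolding spoiler_wins_game_def is_graph_def by metis
  then have "pc_subgraph K H" and "spoiler_wins_game k r K"
    unfolding win_witness_def pc_subgraph_def spoiler_wins_game_def by auto
  then have "K = H" using minimal by blast
  then have "diam_le H (2 ^ r)" using K unfolding win_witness_def by simp
  then show ?thesis unfolding diam_le_def connected_pc_def by blast
qed

end
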